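(* Let $a,b$ be a parallel pair of a regular curve $M$ such that neither $a$ nor $b$ is an inflexion point. If $M$ is curved in the different sides at $a$ and $b$, then the pair $a,b$ cannot produce an asymptote of $\mathrm{CSS}(M)$.
   Context: Two distinct points $a,b\in M$ form a parallel pair if their tangent lines are parallel. $\tau_v$ denotes translation by $v$. $M$ is curved in the same side (resp. different sides) at $a$ and $b$ if the germs of $M$ and $\tau_{a-b}(M)$ at $a=\tau_{a-b}(b)$ lie on the same side (resp. different sides) of the tangent line to $M$ at $a$. The Centre Symmetry Set $\mathrm{CSS}(M)$ is the envelope of lines through parallel pairs. A parallel pair $a,b$ produces an asymptote of $\mathrm{CSS}(M)$ if, for local arc-length parameterizations $f$ near $a=f(s)$ and $g$ near $b=g(t)$ chosen with $f'(s)=-g'(t)$, one has $\kappa_f(s)+\kappa_g(t)=0$ ($\kappa$ the signed curvature); then the line through $a,b$ is an asymptote of $\mathrm{CSS}(M)$. *)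

theory Defs
  imports "HOL-Analysis.Analysis"
begin

definition vel :: "(real \<Rightarrow> complex) \<Rightarrow> real \<Rightarrow> complex" where
  "vel f u = vector_derivative f (at u)"

definition acc :: "(real \<Rightarrow> complex) \<Rightarrow> real \<Rightarrow> complex" where
  "acc f u = vector_derivative (vel f) (at u)"

text \<open>Signed curvature of a (unit speed) parameterization: det(f', f'').\<close>
definition curvature :: "(real \<Rightarrow> complex) \<Rightarrow> real \<Rightarrow> real" where
  "curvature f u = Im (cnj (vel f u) * acc f u)"

definition local_arclength_param ::
  "complex set \<Rightarrow> (real \<Rightarrow> complex) \<Rightarrow> real \<Rightarrow> complex \<Rightarrow> bool" where
  "local_arclength_param M f s a \<longleftrightarrow> f s = a \<and>
     (\<exists>I U. open I \<and> is_interval I \<and> s \<in> I \<and> open U \<and> a \<in> U \<and>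
        inj_on f I \<and> f ` I = M \<inter> U \<and>
        (\<forall>u\<in>I. (f has_vector_derivative vel f u) (at u) \<and>
                 (vel f has_vector_derivative acc f u) (at u) \<and>
                 norm (vel f u) = 1) \<and>
        continuous_on I (acc f))"

definition regular_curve :: "complex set \<Rightarrow> bool" where
  "regular_curve M \<longleftrightarrow> (\<forall>a\<in>M. \<exists>f s. local_arclength_param M f s a)"

definition inflexion_point :: "complex set \<Rightarrow> complex \<Rightarrow> bool" where
  "inflexion_point M a \<longleftrightarrow>
     (\<exists>f s. local_arclength_param M f s a \<and> curvature f s = 0)"

definition parallel_pair :: "complex set \<Rightarrow> complex \<Rightarrow> complex \<Rightarrow> bool" where
  "parallel_pair M a b \<longleftrightarrow> a \<in> M \<and> b \<in> M \<and> a \<noteq> b \<and>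
     (\<exists>f s g t. local_arclength_param M f s a \<and> local_arclength_param M g t b \<and>
        Im (cnj (vel f s) * vel g t) = 0)"

definition translate :: "complex \<Rightarrow> complex set \<Rightarrow> complex set" where
  "translate v M = (\<lambda>z. z + v) ` M"

text \<open>Germ of a set X at a lies strictly on the side of the tangent line at a
  indicated by the normal n (positive side if sg = 1, negative if sg = -1).\<close>
definition germ_on_side :: "complex set \<Rightarrow> complex \<Rightarrow> complex \<Rightarrow> real \<Rightarrow> bool" where
  "germ_on_side X a n sg \<longleftrightarrow>
     (\<exists>U. open U \<and> a \<in> U \<and> (\<forall>x\<in>X \<inter> U - {a}. sg * Re (cnj n * (x - a)) > 0))"

definition curved_different_sides :: "complex set \<Rightarrow> complex \<Rightarrow> complex \<Rightarrow> bool" where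
  "curved_different_sides M a b \<longleftrightarrow>
     (\<exists>f s. local_arclength_param M f s a \<and>
        (let n = \<i> * vel f s in
          (germ_on_side M a n 1 \<and> germ_on_side (translate (a - b) M) a n (-1)) \<or>
          (germ_on_side M a n (-1) \<and> germ_on_side (translate (a - b) M) a n 1)))"

definition produces_asymptote :: "complex set \<Rightarrow> complex \<Rightarrow> complex \<Rightarrow> bool" where
  "produces_asymptote M a b \<longleftrightarrow>
     (\<exists>f s g t. local_arclength_param M f s a \<and> local_arclength_param M g t b \<and>
        vel f s = - vel g t \<and> curvature f s + curvature g t = 0)"

end

theory Submission
  imports Defs
begin

text \<open>Along a unit-speed parameterization the acceleration is \<open>\<kappa> \<i> f'\<close>, so the asymptote
  conditions \<open>f'(s) = - g'(t)\<close> and \<open>\<kappa>\<^sub>f(s) + \<kappa>\<^sub>g(t) = 0\<close> make the accelerations at \<open>a\<close>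
  and \<open>b\<close> equal. By the second derivative test, a germ lying strictly on one side of its tangent
  line has acceleration pointing weakly to that side. The germs of \<open>M\<close> at \<open>a\<close> and of
  \<open>\<tau>\<^bsub>a-b\<^esub>(M)\<close> at \<open>a\<close> (the translated germ at \<open>b\<close>) lie on different sides, so the
  common acceleration is tangent, i.e. \<open>\<kappa>\<^sub>f(s) = 0\<close> and \<open>a\<close> is an inflexion point.\<close>

lemma has_real_derivative_local_min:
  fixes \<phi> :: "real \<Rightarrow> real"
  assumes "(\<phi> has_real_derivative l) (at s)" and "eventually (\<lambda>u. \<phi> s \<le> \<phi> u) (at s)"
  shows "l = 0"
  using fun_cong[OF has_derivative_local_min[OF assms(1)[unfolded has_field_derivative_def] assms(2)], of 1]
  by simp

lemma local_min_second_derivative_nonneg: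
  fixes \<phi> \<phi>' :: "real \<Rightarrow> real"
  assumes I: "open I" "s \<in> I"
    and \<phi>': "\<And>u. u \<in> I \<Longrightarrow> (\<phi> has_real_derivative \<phi>' u) (at u)"
    and \<phi>'': "(\<phi>' has_real_derivative c) (at s)"
    and min: "eventually (\<lambda>u. \<phi> s \<le> \<phi> u) (at s)"
  shows "0 \<le> c"
proof (rule ccontr)
  assume "\<not> 0 \<le> c"
  have "\<phi>' s = 0"
    using has_real_derivative_local_min[OF \<phi>'[OF I(2)] min] .
  with \<phi>'' have "((\<lambda>y. \<phi>' y / (y - s)) \<longlongrightarrow> c) (at s)"
    by (simp add: has_field_derivative_iff)
  with \<open>\<not> 0 \<le> c\<close> have "eventually (\<lambda>y. \<phi>' y / (y - s) < 0) (at s)"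
    by (simp add: order_tendstoD(2))
  then have "eventually (\<lambda>y. \<phi>' y / (y - s) < 0) (at_right s)"
    by (simp add: eventually_at_split)
  moreover have "eventually (\<lambda>y. s < y) (at_right s)"
    by (rule eventually_at_right_less)
  moreover have "eventually (\<lambda>y. y \<in> I) (at_right s)"
    using I eventually_at_topological eventually_at_split by blast
  moreover have "eventually (\<lambda>y. \<phi> s \<le> \<phi> y) (at_right s)"
    using min eventually_at_split by blast
  ultimately have "eventually (\<lambda>y. \<phi>' y < 0 \<and> y \<in> I \<and> \<phi> s \<le> \<phi> y) (at_right s)"
    by eventually_elim (auto simp: divide_less_0_iff)
  then obtain b where "s < b" and b: "\<And>y. s < y \<Longrightarrow> y < b \<Longrightarrow> \<phi>' y < 0 \<and> y \<in> I \<and> \<phi> s \<le> \<phi> y"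
    unfolding eventually_at_right_field by blast
  define y where "y = (s + b) / 2"
  have y: "s < y" "y < b" using \<open>s < b\<close> by (auto simp: y_def)
  have "continuous_on {s..y} \<phi>"
    by (rule DERIV_atLeastAtMost_imp_continuous_on)
      (metis I(2) \<phi>' b y order.strict_trans1 order_le_less)
  then have "\<phi> y < \<phi> s"
    using DERIV_neg_imp_decreasing_open[OF y(1)] \<phi>' b y by (meson order.strict_trans)
  with b[OF y] show False by simp
qed

lemma has_real_derivative_Re_mult:
  assumes "(h has_vector_derivative v) F"
  shows "((\<lambda>u. c * Re (w * h u)) has_real_derivative c * Re (w * v)) F"
proof -
  have "bounded_linear (\<lambda>z. c * Re (w * z))"
    by (intro bounded_linear_const_mult bounded_linear_compose[OF bounded_linear_Re]
        bounded_linear_mult_right)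
  from bounded_linear.has_vector_derivative[OF this assms] show ?thesis
    by (simp add: has_real_derivative_iff_has_vector_derivative)
qed

lemma local_arclength_paramE:
  assumes "local_arclength_param M f s p"
  obtains I U where "f s = p" "open I" "s \<in> I" "open U" "p \<in> U" "inj_on f I" "f ` I = M \<inter> U"
    "\<And>u. u \<in> I \<Longrightarrow> (f has_vector_derivative vel f u) (at u)"
    "\<And>u. u \<in> I \<Longrightarrow> (vel f has_vector_derivative acc f u) (at u)"
    "\<And>u. u \<in> I \<Longrightarrow> norm (vel f u) = 1"
  using assms unfolding local_arclength_param_def by metis

lemma local_arclength_param_acc_orthogonal:
  assumes "local_arclength_param M f s p"
  shows "Re (cnj (vel f s) * acc f s) = 0"
proof -
  obtain I where I: "open I" "s \<in> I"
    and acc: "(vel f has_vector_derivative acc f s) (at s)"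
    and unit: "\<And>u. u \<in> I \<Longrightarrow> norm (vel f u) = 1"
    using local_arclength_paramE[OF assms] by metis
  have "eventually (\<lambda>u. u \<in> I) (at s)"
    using I eventually_at_topological by blast
  then have "eventually (\<lambda>u. (-1) * Re (cnj (vel f s) * vel f s) \<le> (-1) * Re (cnj (vel f s) * vel f u)) (at s)"
  proof eventually_elim
    case (elim u)
    have "Re (cnj (vel f s) * vel f u) \<le> 1"
      using complex_Re_le_cmod[of "cnj (vel f s) * vel f u"] unit[OF elim] unit[OF I(2)]
      by (simp add: norm_mult)
    moreover have "cnj (vel f s) * vel f s = 1"
      using unit[OF I(2)] complex_norm_square[of "vel f s"] by (simp add: mult.commute)
    ultimately show ?case by simp
  qed
  from has_real_derivative_local_min[OF has_real_derivative_Re_mult[OF acc] this] show ?thesis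
    by simp
qed

lemma local_arclength_param_acc_eq:
  assumes "local_arclength_param M f s p"
  shows "acc f s = \<i> * of_real (curvature f s) * vel f s"
proof -
  have unit: "vel f s * cnj (vel f s) = 1"
    using local_arclength_paramE[OF assms] complex_norm_square[of "vel f s"] by (metis of_real_1 power_one)
  have "cnj (vel f s) * acc f s = \<i> * of_real (curvature f s)"
    using local_arclength_param_acc_orthogonal[OF assms]
    by (simp add: complex_eq_iff curvature_def)
  then have "vel f s * cnj (vel f s) * acc f s = vel f s * (\<i> * of_real (curvature f s))"
    by (simp add: mult.assoc)
  with unit show ?thesis by (simp add: ac_simps)
qed

lemma germ_on_side_local_arclength_param:
  assumes param: "local_arclength_param M f s p" and side: "germ_on_side M p n sg" and "sg \<noteq> 0"
  shows "Re (cnj n * vel f s) = 0" and "0 \<le> sg * Re (cnj n * acc f s)"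
proof -
  obtain I U where "f s = p" and I: "open I" "s \<in> I" and "inj_on f I" "f ` I = M \<inter> U"
    and vel: "\<And>u. u \<in> I \<Longrightarrow> (f has_vector_derivative vel f u) (at u)"
    and acc: "(vel f has_vector_derivative acc f s) (at s)"
    using local_arclength_paramE[OF param] by metis
  obtain V where V: "open V" "p \<in> V" and V_side: "\<forall>x\<in>M \<inter> V - {p}. sg * Re (cnj n * (x - p)) > 0"
    using side unfolding germ_on_side_def by blast
  define \<phi> where "\<phi> u = sg * Re (cnj n * f u)" for u
  have "((\<lambda>u. f u) \<longlongrightarrow> p) (at s)"
    using vel[OF I(2)] \<open>f s = p\<close> has_vector_derivative_continuous continuous_at by blast
  then have "eventually (\<lambda>u. f u \<in> V) (at s)"
    using V topological_tendstoD by blast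
  moreover have "eventually (\<lambda>u. u \<in> I \<and> u \<noteq> s) (at s)"
    using I eventually_at_topological by blast
  ultimately have min: "eventually (\<lambda>u. \<phi> s \<le> \<phi> u) (at s)"
  proof eventually_elim
    case (elim u)
    then have "f u \<in> M \<inter> V - {p}"
      using \<open>f s = p\<close> \<open>inj_on f I\<close> \<open>f ` I = M \<inter> U\<close> I(2) by (auto dest: inj_onD)
    with V_side have "0 < sg * Re (cnj n * (f u - p))"
      by blast
    with \<open>f s = p\<close> show ?case
      by (simp add: \<phi>_def algebra_simps)
  qed
  have "0 \<le> sg * Re (cnj n * acc f s)"
    using local_min_second_derivative_nonneg[OF I _ _ min, where \<phi>' = "\<lambda>u. sg * Re (cnj n * vel f u)"]
    unfolding \<phi>_def using has_real_derivative_Re_mult vel acc by blast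
  moreover have "sg * Re (cnj n * vel f s) = 0"
    using has_real_derivative_local_min[OF has_real_derivative_Re_mult[OF vel[OF I(2)]] min[unfolded \<phi>_def]] .
  ultimately show "Re (cnj n * vel f s) = 0" and "0 \<le> sg * Re (cnj n * acc f s)"
    using \<open>sg \<noteq> 0\<close> by auto
qed

lemma germ_on_side_untranslate:
  assumes "germ_on_side (translate d X) (p + d) n sg"
  shows "germ_on_side X p n sg"
proof -
  obtain U where U: "open U" "p + d \<in> U"
    and side: "\<forall>x\<in>translate d X \<inter> U - {p + d}. sg * Re (cnj n * (x - (p + d))) > 0"
    using assms unfolding germ_on_side_def by blast
  have "open ((\<lambda>z. z - d) ` U)" "p \<in> (\<lambda>z. z - d) ` U"
    using open_translation_subtract[OF U(1)] U(2) by (auto intro: image_eqI[of _ _ "p + d"])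
  moreover have "sg * Re (cnj n * (x - p)) > 0" if "x \<in> X \<inter> (\<lambda>z. z - d) ` U - {p}" for x
    using side[rule_format, of "x + d"] that by (auto simp: translate_def)
  ultimately show ?thesis
    unfolding germ_on_side_def by blast
qed

theorem lemma4p6:
  fixes M :: "complex set" and a b :: complex
  assumes "regular_curve M"
    and "parallel_pair M a b"
    and "\<not> inflexion_point M a" and "\<not> inflexion_point M b"
    and "curved_different_sides M a b"
  shows "\<not> produces_asymptote M a b"
proof
  assume "produces_asymptote M a b"
  then obtain f s g t where f: "local_arclength_param M f s a" and g: "local_arclength_param M g t b"
    and opposite: "vel f s = - vel g t" and curvature_sum: "curvature f s + curvature g t = 0"
    unfolding produces_asymptote_def by blast
  obtain f' s' sg where f': "local_arclength_param M f' s' a" and "sg \<noteq> 0"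
    and side_M: "germ_on_side M a (\<i> * vel f' s') sg"
    and side_translate: "germ_on_side (translate (a - b) M) (b + (a - b)) (\<i> * vel f' s') (- sg)"
    using assms(5) unfolding curved_different_sides_def Let_def
    by (metis add.commute diff_add_cancel minus_minus neg_equal_zero zero_neq_one)
  define n where "n = \<i> * vel f' s'"
  have "n \<noteq> 0"
    using local_arclength_paramE[OF f'] by (metis n_def norm_zero zero_neq_one mult_eq_0_iff complex_i_not_zero)
  have "vel f s \<noteq> 0"
    using local_arclength_paramE[OF f] by (metis norm_zero zero_neq_one)
  have tangent: "Re (cnj n * vel f s) = 0" and "0 \<le> sg * Re (cnj n * acc f s)"
    using germ_on_side_local_arclength_param[OF f side_M \<open>sg \<noteq> 0\<close>] by (simp_all add: n_def)
  moreover have "0 \<le> - sg * Re (cnj n * acc g t)"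
    using germ_on_side_local_arclength_param(2)[OF g germ_on_side_untranslate[OF side_translate]] \<open>sg \<noteq> 0\<close>
    by (simp add: n_def)
  moreover have "acc g t = acc f s"
    using local_arclength_param_acc_eq[OF f] local_arclength_param_acc_eq[OF g] opposite curvature_sum
    by (simp add: eq_neg_iff_add_eq_0[symmetric])
  ultimately have "Re (cnj n * acc f s) = 0"
    using \<open>sg \<noteq> 0\<close> by (smt (verit) mult_minus_left zero_le_mult_iff)
  then have "curvature f s * Im (cnj n * vel f s) = 0"
    by (auto simp: local_arclength_param_acc_eq[OF f] mult.commute)
  moreover have "Im (cnj n * vel f s) \<noteq> 0"
    using tangent \<open>n \<noteq> 0\<close> \<open>vel f s \<noteq> 0\<close>
    by (metis complex_cnj_zero_iff complex_eqI mult_eq_0_iff zero_complex.sel)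
  ultimately have "curvature f s = 0"
    by simp
  with f assms(3) show False
    unfolding inflexion_point_def by blast
qed

end
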